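(* Let $P$ be a poset and $\mathcal{U}$ a join-specification for $P$ such that $\mathcal{I}_{\mathcal{U}}$ is a frame. Let $J$ be a finite non-empty index set and $S_j\subseteq P$ for each $j\in J$. Then $\Gamma_{\mathcal{U}}\big(\bigcap_{j\in J}S_j^\downarrow\big)=\bigcap_{j\in J}\Gamma_{\mathcal{U}}(S_j)$.
   Context: For $S\subseteq P$, $S^\downarrow=\{p\in P:p\le s\text{ for some }s\in S\}$. A join-specification for $P$ is a set $\mathcal{U}\subseteq\wp(P)$ such that $\bigvee S$ exists in $P$ for every $S\in\mathcal{U}$ and $\{p\}\in\mathcal{U}$ for every $p\in P$. A $\mathcal{U}$-ideal is a down-closed $C\subseteq P$ with $\bigvee S\in C$ whenever $S\in\mathcal{U}$, $S\subseteq C$; $\mathcal{I}_{\mathcal{U}}$ is the complete lattice of $\mathcal{U}$-ideals ordered by inclusion; $\Gamma_{\mathcal{U}}(S)$ is the smallest $\mathcal{U}$-ideal containing $S$. *)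

theory Defs
  imports Main
begin

text \<open>The poset P is modelled as the carrier type 'a of class order.\<close>

definition is_join :: "'a::order set \<Rightarrow> 'a \<Rightarrow> bool" where
  "is_join S x \<longleftrightarrow> (\<forall>s\<in>S. s \<le> x) \<and> (\<forall>y. (\<forall>s\<in>S. s \<le> y) \<longrightarrow> x \<le> y)"

definition down :: "'a::order set \<Rightarrow> 'a set" where
  "down S = {p. \<exists>s\<in>S. p \<le> s}"

definition join_spec :: "'a::order set set \<Rightarrow> bool" where
  "join_spec U \<longleftrightarrow> (\<forall>S\<in>U. \<exists>x. is_join S x) \<and> (\<forall>p. {p} \<in> U)"

definition U_ideal :: "'a::order set set \<Rightarrow> 'a set \<Rightarrow> bool" where
  "U_ideal U C \<longleftrightarrow> (\<forall>p q. q \<in> C \<longrightarrow> p \<le> q \<longrightarrow> p \<in> C)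
     \<and> (\<forall>S\<in>U. \<forall>x. S \<subseteq> C \<longrightarrow> is_join S x \<longrightarrow> x \<in> C)"

definition Gamma :: "'a::order set set \<Rightarrow> 'a set \<Rightarrow> 'a set" where
  "Gamma U S = \<Inter>{C. U_ideal U C \<and> S \<subseteq> C}"

text \<open>Join of a family of U-ideals in the complete lattice I_U (meets are intersections).\<close>
definition ideal_Join :: "'a::order set set \<Rightarrow> 'a set set \<Rightarrow> 'a set" where
  "ideal_Join U F = Gamma U (\<Union>F)"

definition is_frame :: "'a::order set set \<Rightarrow> bool" where
  "is_frame U \<longleftrightarrow> (\<forall>A F. U_ideal U A \<and> (\<forall>B\<in>F. U_ideal U B) \<longrightarrow>
      A \<inter> ideal_Join U F = ideal_Join U ((\<lambda>B. A \<inter> B) ` F))"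

end

theory Submission
  imports Defs
begin

text \<open>
  For a U-ideal I the frame law, applied to the principal ideals \<open>\<down>x\<close> (x \<in> X) whose join
  is \<open>\<Gamma>(X)\<close>, gives \<open>I \<inter> \<Gamma>(X) = \<Gamma>(I \<inter> X\<down>)\<close>. Using this once with \<open>I = \<Gamma>(A)\<close> and then
  with each \<open>I = \<down>b\<close> (b \<in> B) yields \<open>\<Gamma>(A) \<inter> \<Gamma>(B) = \<Gamma>(A\<down> \<inter> B\<down>)\<close>; the finite case follows
  by induction, since an intersection of down-sets is a down-set.
\<close>

lemma U_ideal_Gamma: "U_ideal U (Gamma U X)"
  unfolding U_ideal_def Gamma_def by blast

lemma subset_Gamma: "X \<subseteq> Gamma U X"
  unfolding Gamma_def by blast

lemma Gamma_least: "U_ideal U C \<Longrightarrow> X \<subseteq> C \<Longrightarrow> Gamma U X \<subseteq> C"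
  unfolding Gamma_def by blast

lemma Gamma_mono: "X \<subseteq> Y \<Longrightarrow> Gamma U X \<subseteq> Gamma U Y"
  by (meson U_ideal_Gamma Gamma_least subset_Gamma order_trans)

lemma subset_down: "X \<subseteq> down X"
  unfolding down_def by blast

lemma down_subset_U_ideal: "U_ideal U C \<Longrightarrow> X \<subseteq> C \<Longrightarrow> down X \<subseteq> C"
  unfolding U_ideal_def down_def by blast

lemma Gamma_down: "Gamma U (down X) = Gamma U X"
proof
  show "Gamma U (down X) \<subseteq> Gamma U X"
    by (rule Gamma_least[OF U_ideal_Gamma down_subset_U_ideal[OF U_ideal_Gamma subset_Gamma]])
  show "Gamma U X \<subseteq> Gamma U (down X)"
    by (rule Gamma_mono[OF subset_down])
qed

lemma Gamma_UN_Gamma: "Gamma U (\<Union>i\<in>I. Gamma U (X i)) = Gamma U (\<Union>i\<in>I. X i)"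
proof
  have "Gamma U (X i) \<subseteq> Gamma U (\<Union>i\<in>I. X i)" if "i \<in> I" for i
    using that by (intro Gamma_mono) blast
  then show "Gamma U (\<Union>i\<in>I. Gamma U (X i)) \<subseteq> Gamma U (\<Union>i\<in>I. X i)"
    by (intro Gamma_least U_ideal_Gamma) blast
  show "Gamma U (\<Union>i\<in>I. X i) \<subseteq> Gamma U (\<Union>i\<in>I. Gamma U (X i))"
    using subset_Gamma by (intro Gamma_mono) blast
qed

lemma U_ideal_down_singleton: "U_ideal U (down {b})"
  unfolding U_ideal_def down_def is_join_def by auto

lemma down_eq_UN_down_singleton: "down X = (\<Union>x\<in>X. down {x})"
  unfolding down_def by auto

lemma down_INT_down: "J \<noteq> {} \<Longrightarrow> down (\<Inter>j\<in>J. down (S j)) = (\<Inter>j\<in>J. down (S j))"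
  unfolding down_def by (auto intro: order_trans)

lemma is_frameD:
  assumes "is_frame U" and "U_ideal U A" and "\<And>B. B \<in> F \<Longrightarrow> U_ideal U B"
  shows "A \<inter> ideal_Join U F = ideal_Join U ((\<inter>) A ` F)"
  using assms unfolding is_frame_def by blast

lemma frame_Int_Gamma:
  assumes "is_frame U" and "U_ideal U I"
  shows "I \<inter> Gamma U X = Gamma U (I \<inter> down X)"
proof -
  let ?F = "(\<lambda>x. down {x}) ` X"
  have "I \<inter> ideal_Join U ?F = ideal_Join U ((\<inter>) I ` ?F)"
    using assms U_ideal_down_singleton by (intro is_frameD) auto
  moreover have "ideal_Join U ?F = Gamma U X"
    unfolding ideal_Join_def by (simp add: down_eq_UN_down_singleton[symmetric] Gamma_down)
  moreover have "\<Union>((\<inter>) I ` ?F) = I \<inter> down X"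
    by (subst down_eq_UN_down_singleton) blast
  ultimately show ?thesis
    unfolding ideal_Join_def by simp
qed

lemma frame_Gamma_Int_Gamma:
  assumes "is_frame U"
  shows "Gamma U A \<inter> Gamma U B = Gamma U (down A \<inter> down B)"
proof -
  have "Gamma U A \<inter> Gamma U B = Gamma U (Gamma U A \<inter> down B)"
    by (rule frame_Int_Gamma[OF assms U_ideal_Gamma])
  also have "Gamma U A \<inter> down B = (\<Union>b\<in>B. down {b} \<inter> Gamma U A)"
    by (auto simp: down_eq_UN_down_singleton[of B])
  also have "\<dots> = (\<Union>b\<in>B. Gamma U (down {b} \<inter> down A))"
    using frame_Int_Gamma[OF assms U_ideal_down_singleton] by simp
  also have "Gamma U \<dots> = Gamma U (\<Union>b\<in>B. down {b} \<inter> down A)"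
    by (rule Gamma_UN_Gamma)
  also have "(\<Union>b\<in>B. down {b} \<inter> down A) = down A \<inter> down B"
    by (auto simp: down_eq_UN_down_singleton[of B])
  finally show ?thesis .
qed

theorem corollary2p18:
  fixes U :: "'a::order set set" and J :: "'i set" and S :: "'i \<Rightarrow> 'a set"
  assumes "join_spec U" and "is_frame U" and "finite J" and "J \<noteq> {}"
  shows "Gamma U (\<Inter>j\<in>J. down (S j)) = (\<Inter>j\<in>J. Gamma U (S j))"
  using assms(3,4)
proof (induction J rule: finite_ne_induct)
  case (singleton j)
  then show ?case by (simp add: Gamma_down)
next
  case (insert j J)
  have "(\<Inter>i\<in>insert j J. Gamma U (S i)) = Gamma U (S j) \<inter> Gamma U (\<Inter>i\<in>J. down (S i))"
    using insert.IH by simp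
  also have "\<dots> = Gamma U (down (S j) \<inter> down (\<Inter>i\<in>J. down (S i)))"
    by (rule frame_Gamma_Int_Gamma[OF assms(2)])
  also have "\<dots> = Gamma U (\<Inter>i\<in>insert j J. down (S i))"
    using down_INT_down[OF insert.hyps(2), of S] by simp
  finally show ?case by simp
qed

end
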